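(* Let $Q_6(I,S)$ and $Q_6(J,T)$ be finite. A map $\varphi:Q_6(I,S)\to Q_6(J,T)$ is a surjective $pm$-morphism if and only if: (1) $\varphi(S)=T$ and $\varphi(\zeta(x))=\zeta(\varphi(x))$ for all $x\in S$; (2) $\varphi^{-1}(J)\subseteq I$; (3) $\varphi(x)\ne\varphi(y)$ for distinct $x,y\in\varphi^{-1}(J)$; (4) for every $x\in I\setminus\varphi^{-1}(J)$ there exists $u\in S\setminus\varphi^{-1}(J)$ with $u\ne x$ and $\varphi(u)=\varphi(x)$.
   Context: For a finite set $S$ with $|S|\ge3$ and $I\subseteq S$, $Q_6(I,S)$ is the finite poset with involution on $S\cup\zeta(S)$, where $\zeta(S)$ is a disjoint copy of $S$, $\zeta$ interchanges each $s\in S$ with its copy $\zeta(s)$, the topology is discrete, and the only strict comparabilities are: for $x,y\in S$, $x<\zeta(y)$ iff ($x\ne y$ or $x\notin I$). For $pm$-spaces $P,Q$, a $pm$-morphism $\varphi:P\to Q$ is a continuous order-preserving map with $\varphi\circ\zeta=\zeta\circ\varphi$ and $\mathrm{Min}(\varphi(x))\subseteq\varphi(\mathrm{Min}(x))$ for all $x\in P$, where $\mathrm{Min}(z)$ denotes the set of minimal elements of the space lying below $z$. *)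

theory Defs
  imports "HOL-Analysis.Analysis"
begin

text \<open>Elements of Q6(I,S): Inl s stands for s in S, Inr s stands for its copy zeta(s).\<close>

definition Q6_carrier :: "'a set \<Rightarrow> ('a + 'a) set" where
  "Q6_carrier S = Inl ` S \<union> Inr ` S"

definition zeta :: "'a + 'a \<Rightarrow> 'a + 'a" where
  "zeta = case_sum Inr Inl"

definition Q6_le :: "'a set \<Rightarrow> 'a set \<Rightarrow> 'a + 'a \<Rightarrow> 'a + 'a \<Rightarrow> bool" where
  "Q6_le I S p q \<longleftrightarrow> p = q \<or>
     (\<exists>x y. x \<in> S \<and> y \<in> S \<and> p = Inl x \<and> q = Inr y \<and> (x \<noteq> y \<or> x \<notin> I))"

definition Min_below :: "'x set \<Rightarrow> ('x \<Rightarrow> 'x \<Rightarrow> bool) \<Rightarrow> 'x \<Rightarrow> 'x set" where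
  "Min_below X le z = {m \<in> X. le m z \<and> (\<forall>y\<in>X. le y m \<longrightarrow> y = m)}"

definition pm_morphism ::
  "'x set \<Rightarrow> ('x \<Rightarrow> 'x \<Rightarrow> bool) \<Rightarrow> ('x \<Rightarrow> 'x) \<Rightarrow>
   'y set \<Rightarrow> ('y \<Rightarrow> 'y \<Rightarrow> bool) \<Rightarrow> ('y \<Rightarrow> 'y) \<Rightarrow> ('x \<Rightarrow> 'y) \<Rightarrow> bool" where
  "pm_morphism X leX zX Y leY zY \<phi> \<longleftrightarrow>
     \<phi> \<in> X \<rightarrow> Y \<and>
     continuous_map (discrete_topology X) (discrete_topology Y) \<phi> \<and>
     (\<forall>x\<in>X. \<forall>y\<in>X. leX x y \<longrightarrow> leY (\<phi> x) (\<phi> y)) \<and>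
     (\<forall>x\<in>X. \<phi> (zX x) = zY (\<phi> x)) \<and>
     (\<forall>x\<in>X. Min_below Y leY (\<phi> x) \<subseteq> \<phi> ` Min_below X leX x)"

definition Q6_pm_morphism ::
  "'a set \<Rightarrow> 'a set \<Rightarrow> 'b set \<Rightarrow> 'b set \<Rightarrow> ('a + 'a \<Rightarrow> 'b + 'b) \<Rightarrow> bool" where
  "Q6_pm_morphism I S J T \<phi> \<longleftrightarrow>
     pm_morphism (Q6_carrier S) (Q6_le I S) zeta (Q6_carrier T) (Q6_le J T) zeta \<phi>"

end

theory Submission
  imports Defs
begin

text \<open>Since Min(s) = {s} for s in S, while Min(zeta(t)) contains some s' \<noteq> t, a pm-morphism must
  send S into T; commuting with zeta, it is then the map induced by some f : S \<rightarrow> T on both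
  copies. For an induced map, monotonicity says exactly that f is injective on the preimage of J
  and that this preimage lies in I, and the Min-condition at zeta(y) says that every t \<noteq> f(y) has a preimage
  (surjectivity) and that f(y) has a preimage other than y unless f(y) \<in> J or y \<notin> I.\<close>

lemma pm_morphism_iff:
  "pm_morphism X leX zX Y leY zY \<phi> \<longleftrightarrow>
     \<phi> \<in> X \<rightarrow> Y \<and>
     (\<forall>x\<in>X. \<forall>y\<in>X. leX x y \<longrightarrow> leY (\<phi> x) (\<phi> y)) \<and>
     (\<forall>x\<in>X. \<phi> (zX x) = zY (\<phi> x)) \<and>
     (\<forall>x\<in>X. Min_below Y leY (\<phi> x) \<subseteq> \<phi> ` Min_below X leX x)"
  by (auto simp: pm_morphism_def)

lemma zeta_simps [simp]: "zeta (Inl x) = Inr x" "zeta (Inr x) = Inl x"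
  by (simp_all add: zeta_def)

lemma Q6_carrier_cases [consumes 1, case_names Inl Inr]:
  assumes "p \<in> Q6_carrier S"
  obtains x where "x \<in> S" "p = Inl x" | x where "x \<in> S" "p = Inr x"
  using assms by (auto simp: Q6_carrier_def)

lemma Inl_in_Q6_carrier [simp]: "Inl x \<in> Q6_carrier S \<longleftrightarrow> x \<in> S"
  and Inr_in_Q6_carrier [simp]: "Inr x \<in> Q6_carrier S \<longleftrightarrow> x \<in> S"
  by (auto simp: Q6_carrier_def)

lemma ball_Q6_carrier: "(\<forall>p\<in>Q6_carrier S. P p) \<longleftrightarrow> (\<forall>x\<in>S. P (Inl x)) \<and> (\<forall>x\<in>S. P (Inr x))"
  by (auto simp: Q6_carrier_def)

lemma Q6_carrier_eq_iff: "Q6_carrier A = Q6_carrier B \<longleftrightarrow> A = B"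
  by (auto simp: Q6_carrier_def)

lemma Q6_le_simps [simp]:
  "Q6_le I S (Inl x) (Inl y) \<longleftrightarrow> x = y"
  "Q6_le I S (Inr x) q \<longleftrightarrow> q = Inr x"
  "Q6_le I S (Inl x) (Inr y) \<longleftrightarrow> x \<in> S \<and> y \<in> S \<and> (x \<noteq> y \<or> x \<notin> I)"
  by (auto simp: Q6_le_def)

lemma Q6_le_Inl_iff: "Q6_le I S q (Inl x) \<longleftrightarrow> q = Inl x"
  by (cases q) simp_all

lemma card_ge_2_obtains_other:
  assumes "finite S" "card S \<ge> 2"
  obtains x where "x \<in> S" "x \<noteq> y"
proof -
  have "\<not> S \<subseteq> {y}"
    using card_mono[of "{y}" S] assms by auto
  then show thesis using that by blast
qed

lemma Min_below_Q6_Inl: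
  assumes "x \<in> S"
  shows "Min_below (Q6_carrier S) (Q6_le I S) (Inl x) = {Inl x}"
  using assms by (auto simp: Min_below_def Q6_le_Inl_iff)

lemma Min_below_Q6_Inr:
  assumes "finite S" "card S \<ge> 2" "y \<in> S"
  shows "Min_below (Q6_carrier S) (Q6_le I S) (Inr y) = Inl ` {x \<in> S. x \<noteq> y \<or> x \<notin> I}"
proof (rule set_eqI)
  fix m :: "'a + 'a"
  obtain z where z: "z \<in> S" "z \<noteq> y"
    using card_ge_2_obtains_other[OF assms(1,2)] .
  then have not_minimal: "Inr y \<notin> Min_below (Q6_carrier S) (Q6_le I S) (Inr y)"
    using assms(3) by (auto simp: Min_below_def intro!: bexI[of _ "Inl z"])
  show "m \<in> Min_below (Q6_carrier S) (Q6_le I S) (Inr y) \<longleftrightarrow> m \<in> Inl ` {x \<in> S. x \<noteq> y \<or> x \<notin> I}"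
  proof (cases m)
    case (Inl x)
    then show ?thesis using assms(3) by (auto simp: Min_below_def Q6_le_Inl_iff)
  next
    case (Inr x)
    then show ?thesis using not_minimal by (auto simp: Min_below_def)
  qed
qed

lemma Q6_pm_morphism_Inl:
  assumes "Q6_pm_morphism I S J T \<phi>" "finite T" "card T \<ge> 2" "x \<in> S"
  shows "\<phi> (Inl x) \<in> Inl ` T"
proof -
  have "\<phi> (Inl x) \<in> Q6_carrier T"
    and "Min_below (Q6_carrier T) (Q6_le J T) (\<phi> (Inl x))
           \<subseteq> \<phi> ` Min_below (Q6_carrier S) (Q6_le I S) (Inl x)"
    using assms(1,4) by (auto simp: Q6_pm_morphism_def pm_morphism_iff)
  then have Min: "Min_below (Q6_carrier T) (Q6_le J T) (\<phi> (Inl x)) \<subseteq> {\<phi> (Inl x)}"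
    by (simp add: Min_below_Q6_Inl[OF assms(4)])
  from \<open>\<phi> (Inl x) \<in> Q6_carrier T\<close> show ?thesis
  proof (cases rule: Q6_carrier_cases)
    case (Inr t)
    obtain s where "s \<in> T" "s \<noteq> t"
      using card_ge_2_obtains_other[OF assms(2,3)] .
    then have "Inl s \<in> Min_below (Q6_carrier T) (Q6_le J T) (\<phi> (Inl x))"
      using Inr Min_below_Q6_Inr[OF assms(2,3) Inr(1)] by auto
    with Min Inr show ?thesis by auto
  qed auto
qed

text \<open>Conditions (2)--(4) of the theorem, for the map f : S \<rightarrow> T inducing \<phi> on both copies.\<close>

definition Q6_admissible :: "'a set \<Rightarrow> 'a set \<Rightarrow> 'b set \<Rightarrow> ('a \<Rightarrow> 'b) \<Rightarrow> bool" where
  "Q6_admissible I S J f \<longleftrightarrow>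
     (\<forall>x\<in>S. f x \<in> J \<longrightarrow> x \<in> I) \<and>
     inj_on f {x \<in> S. f x \<in> J} \<and>
     (\<forall>x\<in>I. f x \<notin> J \<longrightarrow> (\<exists>u\<in>S. u \<noteq> x \<and> f u = f x))"

lemma induced_image_Q6_carrier:
  assumes "\<And>x. x \<in> S \<Longrightarrow> \<phi> (Inl x) = Inl (f x)" "\<And>x. x \<in> S \<Longrightarrow> \<phi> (Inr x) = Inr (f x)"
  shows "\<phi> ` Q6_carrier S = Q6_carrier (f ` S)"
  using assms by (force simp: Q6_carrier_def)

lemma induced_monotone_iff:
  assumes "\<And>x. x \<in> S \<Longrightarrow> \<phi> (Inl x) = Inl (f x)" "\<And>x. x \<in> S \<Longrightarrow> \<phi> (Inr x) = Inr (f x)"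
    and "f ` S \<subseteq> T"
  shows "(\<forall>p\<in>Q6_carrier S. \<forall>q\<in>Q6_carrier S. Q6_le I S p q \<longrightarrow> Q6_le J T (\<phi> p) (\<phi> q)) \<longleftrightarrow>
    (\<forall>x\<in>S. f x \<in> J \<longrightarrow> x \<in> I) \<and> inj_on f {x \<in> S. f x \<in> J}"
proof -
  have "(\<forall>p\<in>Q6_carrier S. \<forall>q\<in>Q6_carrier S. Q6_le I S p q \<longrightarrow> Q6_le J T (\<phi> p) (\<phi> q)) \<longleftrightarrow>
    (\<forall>x\<in>S. \<forall>y\<in>S. f x = f y \<and> f x \<in> J \<longrightarrow> x = y \<and> x \<in> I)"
    using assms(1,2) assms(3)[unfolded image_subset_iff] by (auto simp: ball_Q6_carrier) blast
  also have "\<dots> \<longleftrightarrow> (\<forall>x\<in>S. f x \<in> J \<longrightarrow> x \<in> I) \<and> inj_on f {x \<in> S. f x \<in> J}"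
    by (auto simp: inj_on_def)
  finally show ?thesis .
qed

lemma preimages_avoiding_iff:
  assumes "f ` S = T" "I \<subseteq> S"
  shows "(\<forall>y\<in>S. {t \<in> T. t \<noteq> f y \<or> f y \<notin> J} \<subseteq> f ` {u \<in> S. u \<noteq> y \<or> u \<notin> I}) \<longleftrightarrow>
    (\<forall>x\<in>I. f x \<notin> J \<longrightarrow> (\<exists>u\<in>S. u \<noteq> x \<and> f u = f x))"
proof
  assume preimages: "\<forall>y\<in>S. {t \<in> T. t \<noteq> f y \<or> f y \<notin> J} \<subseteq> f ` {u \<in> S. u \<noteq> y \<or> u \<notin> I}"
  show "\<forall>x\<in>I. f x \<notin> J \<longrightarrow> (\<exists>u\<in>S. u \<noteq> x \<and> f u = f x)"
  proof (intro ballI impI)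
    fix x assume "x \<in> I" "f x \<notin> J"
    then have "f x \<in> f ` {u \<in> S. u \<noteq> x \<or> u \<notin> I}"
      using preimages assms(1,2) by blast
    then show "\<exists>u\<in>S. u \<noteq> x \<and> f u = f x" using \<open>x \<in> I\<close> by auto
  qed
next
  assume other_preimage: "\<forall>x\<in>I. f x \<notin> J \<longrightarrow> (\<exists>u\<in>S. u \<noteq> x \<and> f u = f x)"
  show "\<forall>y\<in>S. {t \<in> T. t \<noteq> f y \<or> f y \<notin> J} \<subseteq> f ` {u \<in> S. u \<noteq> y \<or> u \<notin> I}"
  proof (intro ballI subsetI)
    fix y t assume y: "y \<in> S" and t: "t \<in> {t \<in> T. t \<noteq> f y \<or> f y \<notin> J}"
    then obtain x where x: "x \<in> S" "t = f x" using assms(1) by auto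
    show "t \<in> f ` {u \<in> S. u \<noteq> y \<or> u \<notin> I}"
    proof (cases "t = f y \<and> y \<in> I")
      case True
      then obtain u where "u \<in> S" "u \<noteq> y" "f u = t"
        using other_preimage t by auto
      then show ?thesis by auto
    next
      case False
      then show ?thesis using x y by (auto intro: image_eqI[of t f y])
    qed
  qed
qed

lemma induced_Min_below_iff:
  assumes "\<And>x. x \<in> S \<Longrightarrow> \<phi> (Inl x) = Inl (f x)" "\<And>x. x \<in> S \<Longrightarrow> \<phi> (Inr x) = Inr (f x)"
    and "f ` S = T" "I \<subseteq> S" "finite S" "card S \<ge> 2" "finite T" "card T \<ge> 2"
  shows "(\<forall>p\<in>Q6_carrier S. Min_below (Q6_carrier T) (Q6_le J T) (\<phi> p)
            \<subseteq> \<phi> ` Min_below (Q6_carrier S) (Q6_le I S) p) \<longleftrightarrow>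
    (\<forall>x\<in>I. f x \<notin> J \<longrightarrow> (\<exists>u\<in>S. u \<noteq> x \<and> f u = f x))"
proof -
  have "Min_below (Q6_carrier T) (Q6_le J T) (\<phi> (Inr y))
          \<subseteq> \<phi> ` Min_below (Q6_carrier S) (Q6_le I S) (Inr y) \<longleftrightarrow>
        {t \<in> T. t \<noteq> f y \<or> f y \<notin> J} \<subseteq> f ` {u \<in> S. u \<noteq> y \<or> u \<notin> I}"
    if "y \<in> S" for y
  proof -
    have "f y \<in> T" using that assms(3) by blast
    then have "Min_below (Q6_carrier T) (Q6_le J T) (\<phi> (Inr y)) = Inl ` {t \<in> T. t \<noteq> f y \<or> f y \<notin> J}"
      using that assms(2,7,8) by (simp add: Min_below_Q6_Inr)
    moreover have "\<phi> ` Min_below (Q6_carrier S) (Q6_le I S) (Inr y) = Inl ` f ` {u \<in> S. u \<noteq> y \<or> u \<notin> I}"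
      using that assms(1,5,6) by (simp add: Min_below_Q6_Inr image_image)
    ultimately show ?thesis by (simp add: inj_image_subset_iff)
  qed
  moreover have "Min_below (Q6_carrier T) (Q6_le J T) (\<phi> (Inl x))
          \<subseteq> \<phi> ` Min_below (Q6_carrier S) (Q6_le I S) (Inl x)" if "x \<in> S" for x
    using that assms by (auto simp: Min_below_Q6_Inl)
  ultimately have "(\<forall>p\<in>Q6_carrier S. Min_below (Q6_carrier T) (Q6_le J T) (\<phi> p)
            \<subseteq> \<phi> ` Min_below (Q6_carrier S) (Q6_le I S) p) \<longleftrightarrow>
    (\<forall>y\<in>S. {t \<in> T. t \<noteq> f y \<or> f y \<notin> J} \<subseteq> f ` {u \<in> S. u \<noteq> y \<or> u \<notin> I})"
    by (simp add: ball_Q6_carrier)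
  also have "\<dots> \<longleftrightarrow> (\<forall>x\<in>I. f x \<notin> J \<longrightarrow> (\<exists>u\<in>S. u \<noteq> x \<and> f u = f x))"
    using assms(3,4) by (rule preimages_avoiding_iff)
  finally show ?thesis .
qed

lemma induced_Q6_pm_morphism_iff:
  assumes "\<And>x. x \<in> S \<Longrightarrow> \<phi> (Inl x) = Inl (f x)" "\<And>x. x \<in> S \<Longrightarrow> \<phi> (Inr x) = Inr (f x)"
    and "f ` S = T" "I \<subseteq> S" "finite S" "card S \<ge> 2" "finite T" "card T \<ge> 2"
  shows "Q6_pm_morphism I S J T \<phi> \<longleftrightarrow> Q6_admissible I S J f"
proof -
  have "\<phi> \<in> Q6_carrier S \<rightarrow> Q6_carrier T"
    using induced_image_Q6_carrier[OF assms(1,2)] assms(3) by blast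
  moreover have "\<forall>p\<in>Q6_carrier S. \<phi> (zeta p) = zeta (\<phi> p)"
    using assms(1,2) by (simp add: ball_Q6_carrier)
  ultimately have "Q6_pm_morphism I S J T \<phi> \<longleftrightarrow>
      (\<forall>p\<in>Q6_carrier S. \<forall>q\<in>Q6_carrier S. Q6_le I S p q \<longrightarrow> Q6_le J T (\<phi> p) (\<phi> q)) \<and>
      (\<forall>p\<in>Q6_carrier S. Min_below (Q6_carrier T) (Q6_le J T) (\<phi> p)
         \<subseteq> \<phi> ` Min_below (Q6_carrier S) (Q6_le I S) p)"
    by (simp add: Q6_pm_morphism_def pm_morphism_iff)
  also have "\<dots> \<longleftrightarrow> Q6_admissible I S J f"
    unfolding Q6_admissible_def
    using induced_monotone_iff[OF assms(1,2) equalityD1[OF assms(3)]] induced_Min_below_iff[OF assms]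
    by simp
  finally show ?thesis .
qed

lemma induced_other_preimage_iff:
  fixes \<phi> :: "'a + 'a \<Rightarrow> 'b + 'c"
  assumes "\<And>x. x \<in> S \<Longrightarrow> \<phi> (Inl x) = Inl (f x)" "I \<subseteq> S"
  shows "(\<forall>x \<in> Inl ` I - Inl ` {x \<in> S. f x \<in> J}.
      \<exists>u \<in> Inl ` S - Inl ` {x \<in> S. f x \<in> J}. u \<noteq> x \<and> \<phi> u = \<phi> x) \<longleftrightarrow>
    (\<forall>x\<in>I. f x \<notin> J \<longrightarrow> (\<exists>u\<in>S. u \<noteq> x \<and> f u = f x))"
proof
  assume other_preimage: "\<forall>x \<in> Inl ` I - Inl ` {x \<in> S. f x \<in> J}.
      \<exists>u \<in> Inl ` S - Inl ` {x \<in> S. f x \<in> J}. u \<noteq> x \<and> \<phi> u = \<phi> x"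
  show "\<forall>x\<in>I. f x \<notin> J \<longrightarrow> (\<exists>u\<in>S. u \<noteq> x \<and> f u = f x)"
  proof (intro ballI impI)
    fix x assume "x \<in> I" "f x \<notin> J"
    then have "x \<in> S" and Inl_x: "Inl x \<in> Inl ` I - Inl ` {x \<in> S. f x \<in> J}"
      using assms(2) by auto
    have "\<exists>u \<in> Inl ` S - Inl ` {x \<in> S. f x \<in> J}. u \<noteq> Inl x \<and> \<phi> u = \<phi> (Inl x)"
      using other_preimage Inl_x by (rule bspec)
    then obtain u where "u \<in> S" "u \<noteq> x" "\<phi> (Inl u) = \<phi> (Inl x)"
      by blast
    then show "\<exists>u\<in>S. u \<noteq> x \<and> f u = f x"
      using assms(1) \<open>x \<in> S\<close> by auto
  qed
next
  assume other_preimage: "\<forall>x\<in>I. f x \<notin> J \<longrightarrow> (\<exists>u\<in>S. u \<noteq> x \<and> f u = f x)"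
  show "\<forall>x \<in> Inl ` I - Inl ` {x \<in> S. f x \<in> J}.
      \<exists>u \<in> Inl ` S - Inl ` {x \<in> S. f x \<in> J}. u \<noteq> x \<and> \<phi> u = \<phi> x"
  proof
    fix p :: "'a + 'a" assume "p \<in> Inl ` I - Inl ` {x \<in> S. f x \<in> J}"
    then obtain x where "x \<in> I" "p = Inl x" and "Inl x \<notin> Inl ` {x \<in> S. f x \<in> J}"
      by blast
    then have x: "p = Inl x" "x \<in> S" "f x \<notin> J"
      using assms(2) by auto
    with other_preimage \<open>x \<in> I\<close> obtain u where u: "u \<in> S" "u \<noteq> x" "f u = f x"
      by blast
    then have "Inl u \<in> Inl ` S - Inl ` {x \<in> S. f x \<in> J}"
      using x by auto
    moreover have "Inl u \<noteq> p" "\<phi> (Inl u) = \<phi> p"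
      using assms(1) u x by simp_all
    ultimately show "\<exists>u \<in> Inl ` S - Inl ` {x \<in> S. f x \<in> J}. u \<noteq> p \<and> \<phi> u = \<phi> p"
      by (intro bexI[of _ "Inl u"] conjI)
  qed
qed

lemma induced_conditions_iff_admissible:
  assumes "\<And>x. x \<in> S \<Longrightarrow> \<phi> (Inl x) = Inl (f x)" "\<And>x. x \<in> S \<Longrightarrow> \<phi> (Inr x) = Inr (f x)"
    and "I \<subseteq> S"
  shows "({p \<in> Q6_carrier S. \<phi> p \<in> Inl ` J} \<subseteq> Inl ` I \<and>
     inj_on \<phi> {p \<in> Q6_carrier S. \<phi> p \<in> Inl ` J} \<and>
     (\<forall>x \<in> Inl ` I - {p \<in> Q6_carrier S. \<phi> p \<in> Inl ` J}.
        \<exists>u \<in> Inl ` S - {p \<in> Q6_carrier S. \<phi> p \<in> Inl ` J}. u \<noteq> x \<and> \<phi> u = \<phi> x))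
    \<longleftrightarrow> Q6_admissible I S J f"
proof -
  have preimage: "{p \<in> Q6_carrier S. \<phi> p \<in> Inl ` J} = Inl ` {x \<in> S. f x \<in> J}"
    using assms(1,2) by (auto simp: Q6_carrier_def)
  have Inl_subset_iff: "Inl ` {x \<in> S. f x \<in> J} \<subseteq> Inl ` I \<longleftrightarrow> (\<forall>x\<in>S. f x \<in> J \<longrightarrow> x \<in> I)"
    by auto
  have inj_iff: "inj_on \<phi> (Inl ` {x \<in> S. f x \<in> J}) \<longleftrightarrow> inj_on f {x \<in> S. f x \<in> J}"
    using assms(1) by (auto simp: inj_on_def)
  have other_preimage_iff: "(\<forall>x \<in> Inl ` I - Inl ` {x \<in> S. f x \<in> J}.
        \<exists>u \<in> Inl ` S - Inl ` {x \<in> S. f x \<in> J}. u \<noteq> x \<and> \<phi> u = \<phi> x) \<longleftrightarrow>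
      (\<forall>x\<in>I. f x \<notin> J \<longrightarrow> (\<exists>u\<in>S. u \<noteq> x \<and> f u = f x))"
    using assms(1,3) by (rule induced_other_preimage_iff)
  show ?thesis
    unfolding preimage Q6_admissible_def Inl_subset_iff inj_iff other_preimage_iff
    by (rule refl)
qed

lemma induced_by_projl:
  assumes "\<forall>x\<in>S. \<phi> (Inl x) \<in> Inl ` T" "\<forall>x\<in>S. \<phi> (zeta (Inl x)) = zeta (\<phi> (Inl x))" "x \<in> S"
  shows "\<phi> (Inl x) = Inl (projl (\<phi> (Inl x)))" "\<phi> (Inr x) = Inr (projl (\<phi> (Inl x)))"
  using assms by auto

lemma Q6_surjective_pm_morphism_iff:
  assumes "\<forall>x\<in>S. \<phi> (Inl x) \<in> Inl ` T" "\<forall>x\<in>S. \<phi> (zeta (Inl x)) = zeta (\<phi> (Inl x))"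
    and "I \<subseteq> S" "finite S" "card S \<ge> 2" "finite T" "card T \<ge> 2"
  shows "(Q6_pm_morphism I S J T \<phi> \<and> \<phi> ` Q6_carrier S = Q6_carrier T) \<longleftrightarrow>
    (\<lambda>x. projl (\<phi> (Inl x))) ` S = T \<and> Q6_admissible I S J (\<lambda>x. projl (\<phi> (Inl x)))"
proof -
  note induced = induced_by_projl[OF assms(1,2)]
  have "\<phi> ` Q6_carrier S = Q6_carrier T \<longleftrightarrow> (\<lambda>x. projl (\<phi> (Inl x))) ` S = T"
    by (simp add: induced_image_Q6_carrier[OF induced] Q6_carrier_eq_iff)
  then show ?thesis
    using induced_Q6_pm_morphism_iff[OF induced _ assms(3-7)] by blast
qed

lemma Q6_conditions_iff:
  assumes "\<forall>x\<in>S. \<phi> (Inl x) \<in> Inl ` T" "\<forall>x\<in>S. \<phi> (zeta (Inl x)) = zeta (\<phi> (Inl x))"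
    and "I \<subseteq> S"
  shows "((\<phi> ` (Inl ` S) = Inl ` T \<and> (\<forall>x\<in>S. \<phi> (zeta (Inl x)) = zeta (\<phi> (Inl x)))) \<and>
     {p \<in> Q6_carrier S. \<phi> p \<in> Inl ` J} \<subseteq> Inl ` I \<and>
     inj_on \<phi> {p \<in> Q6_carrier S. \<phi> p \<in> Inl ` J} \<and>
     (\<forall>x \<in> Inl ` I - {p \<in> Q6_carrier S. \<phi> p \<in> Inl ` J}.
        \<exists>u \<in> Inl ` S - {p \<in> Q6_carrier S. \<phi> p \<in> Inl ` J}. u \<noteq> x \<and> \<phi> u = \<phi> x))
    \<longleftrightarrow> (\<lambda>x. projl (\<phi> (Inl x))) ` S = T \<and> Q6_admissible I S J (\<lambda>x. projl (\<phi> (Inl x)))"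
proof -
  note induced = induced_by_projl[OF assms(1,2)]
  have "\<phi> ` Inl ` S = Inl ` (\<lambda>x. projl (\<phi> (Inl x))) ` S"
    using induced(1) by (simp add: image_image cong: image_cong)
  then have "(\<phi> ` Inl ` S = Inl ` T \<and> (\<forall>x\<in>S. \<phi> (zeta (Inl x)) = zeta (\<phi> (Inl x)))) \<longleftrightarrow>
      (\<lambda>x. projl (\<phi> (Inl x))) ` S = T"
    using assms(2) by (simp add: inj_image_eq_iff)
  then show ?thesis
    using induced_conditions_iff_admissible[OF induced assms(3)] by (rule conj_cong)
qed

theorem lemma5p2:
  fixes I S :: "'a set" and J T :: "'b set" and \<phi> :: "'a + 'a \<Rightarrow> 'b + 'b"
  assumes "finite S" "card S \<ge> 3" "I \<subseteq> S"
      and "finite T" "card T \<ge> 3" "J \<subseteq> T"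
  shows "(Q6_pm_morphism I S J T \<phi> \<and> \<phi> ` Q6_carrier S = Q6_carrier T) \<longleftrightarrow>
    ((\<phi> ` (Inl ` S) = Inl ` T \<and> (\<forall>x\<in>S. \<phi> (zeta (Inl x)) = zeta (\<phi> (Inl x)))) \<and>
     {p \<in> Q6_carrier S. \<phi> p \<in> Inl ` J} \<subseteq> Inl ` I \<and>
     inj_on \<phi> {p \<in> Q6_carrier S. \<phi> p \<in> Inl ` J} \<and>
     (\<forall>x \<in> Inl ` I - {p \<in> Q6_carrier S. \<phi> p \<in> Inl ` J}.
        \<exists>u \<in> Inl ` S - {p \<in> Q6_carrier S. \<phi> p \<in> Inl ` J}. u \<noteq> x \<and> \<phi> u = \<phi> x))"
    (is "?morphism \<longleftrightarrow> ?induced \<and> ?conditions")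
proof -
  have card: "card S \<ge> 2" "card T \<ge> 2" using assms(2,5) by simp_all
  have iff: "?morphism \<longleftrightarrow> ?induced \<and> ?conditions"
    if "\<forall>x\<in>S. \<phi> (Inl x) \<in> Inl ` T" "\<forall>x\<in>S. \<phi> (zeta (Inl x)) = zeta (\<phi> (Inl x))"
    using Q6_surjective_pm_morphism_iff[OF that assms(3,1) card(1) assms(4) card(2)]
      Q6_conditions_iff[OF that assms(3)]
    by (rule trans[OF _ sym])
  show ?thesis
  proof
    assume morphism: ?morphism
    then have "\<forall>p\<in>Q6_carrier S. \<phi> (zeta p) = zeta (\<phi> p)"
      unfolding Q6_pm_morphism_def pm_morphism_iff by blast
    then have commutes: "\<forall>x\<in>S. \<phi> (zeta (Inl x)) = zeta (\<phi> (Inl x))"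
      by (auto simp del: zeta_simps)
    have "\<forall>x\<in>S. \<phi> (Inl x) \<in> Inl ` T"
      using Q6_pm_morphism_Inl[OF conjunct1[OF morphism] assms(4) card(2)] by blast
    from iff[OF this commutes] morphism show "?induced \<and> ?conditions"
      by (rule iffD1)
  next
    assume induced_conditions: "?induced \<and> ?conditions"
    then have "\<phi> ` Inl ` S = Inl ` T"
      by (rule conjunct1[OF conjunct1])
    then have "\<forall>x\<in>S. \<phi> (Inl x) \<in> Inl ` T"
      by blast
    moreover have "\<forall>x\<in>S. \<phi> (zeta (Inl x)) = zeta (\<phi> (Inl x))"
      using induced_conditions by (rule conjunct2[OF conjunct1])
    ultimately have "?morphism \<longleftrightarrow> ?induced \<and> ?conditions"
      by (rule iff)
    from this induced_conditions show ?morphism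
      by (rule iffD2)
  qed
qed

end
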